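(* Let $\beta$ be a totally positive quadratic integer with $\operatorname{Tr}\beta > \operatorname{Nm}\beta$. Then there exists a constant $c_\beta > 0$ such that $p_\beta\big((\operatorname{Tr}\beta)\beta^n\big) \leq c_\beta$ for all $n \in \mathbb{Z}_{\geq 0}$.
   Context: A quadratic integer is a root of a monic irreducible quadratic polynomial in $\mathbb{Z}[x]$; it is totally positive if both it and its conjugate $\beta'$ are positive. $\operatorname{Tr}\beta = \beta + \beta'$, $\operatorname{Nm}\beta = \beta\beta'$. For $\alpha \in \mathbb{C}$, $p_\beta(\alpha) \in \mathbb{Z}_{\geq 0}\cup\{\infty\}$ is the number of polynomials $f \in \mathbb{Z}_{\geq 0}[x]$ (non-negative integer coefficients) with $f(\beta) = \alpha$. *)

theory Defs
  imports "HOL-Computational_Algebra.Polynomial" "HOL-Library.Extended_Nat" Complex_Main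
begin

text \<open>A quadratic integer: a root of a monic irreducible quadratic polynomial in Z[x].
  The minimal polynomial is then x^2 - Tr(beta) x + Nm(beta).\<close>

definition quad_minpoly :: "int poly \<Rightarrow> complex \<Rightarrow> bool" where
  "quad_minpoly q \<beta> \<longleftrightarrow> degree q = 2 \<and> lead_coeff q = 1 \<and> irreducible q
      \<and> poly (map_poly of_int q) \<beta> = 0"

definition quadratic_integer :: "complex \<Rightarrow> bool" where
  "quadratic_integer \<beta> \<longleftrightarrow> (\<exists>q. quad_minpoly q \<beta>)"

text \<open>The minimal polynomial is unique, so these are well defined.\<close>
definition qtrace :: "complex \<Rightarrow> int" where
  "qtrace \<beta> = - coeff (THE q. quad_minpoly q \<beta>) 1"

definition qnorm :: "complex \<Rightarrow> int" where
  "qnorm \<beta> = coeff (THE q. quad_minpoly q \<beta>) 0"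

definition qconj :: "complex \<Rightarrow> complex" where
  "qconj \<beta> = of_int (qtrace \<beta>) - \<beta>"

definition totally_positive :: "complex \<Rightarrow> bool" where
  "totally_positive \<beta> \<longleftrightarrow> quadratic_integer \<beta> \<and>
     \<beta> \<in> \<real> \<and> Re \<beta> > 0 \<and> qconj \<beta> \<in> \<real> \<and> Re (qconj \<beta>) > 0"

definition p_count :: "complex \<Rightarrow> complex \<Rightarrow> enat" where
  "p_count \<beta> \<alpha> = (let S = {f :: nat poly. poly (map_poly of_nat f) \<beta> = \<alpha>} in
     if finite S then enat (card S) else \<infinity>)"

end

theory Submission
  imports Defs
begin

(* Let t = Tr beta. Both beta and its conjugate beta' are real and positive, and
   (1 - beta)(1 - beta') = 1 - Tr beta + Nm beta <= 0; as beta is irrational, one root lies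
   in (0,1) and the other in (1,oo). Galois conjugation turns f(beta) = t beta^n into
   f(beta') = t beta'^n for every f with non-negative integer coefficients. Comparing a single
   term a_k x^k with f(x) = t x^n at the root below 1 and at the root above 1 gives a_k <= t,
   and a_k = 0 unless |k - n| < K for some K independent of n. So at most (t+1)^(2K)
   polynomials represent t beta^n. *)

lemma monic_quadratic_eq:
  fixes q :: "'a::comm_ring_1 poly"
  assumes "degree q = 2" "lead_coeff q = 1"
  shows "q = [:coeff q 0, coeff q 1, 1:]"
proof (rule poly_eqI)
  fix k
  show "coeff q k = coeff [:coeff q 0, coeff q 1, 1:] k"
    using assms coeff_eq_0[of q k]
    by (cases "k \<le> 2") (auto simp: coeff_pCons le_Suc_eq numeral_2_eq_2 split: nat.splits)
qed

lemma quad_minpoly_root: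
  assumes "quad_minpoly q \<beta>"
  shows "\<beta>\<^sup>2 + of_int (coeff q 1) * \<beta> + of_int (coeff q 0) = 0"
proof -
  have "q = [:coeff q 0, coeff q 1, 1:]"
    using assms monic_quadratic_eq unfolding quad_minpoly_def by blast
  moreover have "poly (map_poly of_int q) \<beta> = 0"
    using assms unfolding quad_minpoly_def by blast
  ultimately have "poly (map_poly of_int [:coeff q 0, coeff q 1, 1:]) \<beta> = 0"
    by simp
  then show ?thesis
    by (simp add: map_poly_pCons power2_eq_square algebra_simps)
qed

lemma poly_map_poly_of_int_of_int:
  "poly (map_poly of_int p) (of_int a :: 'a::comm_ring_1) = of_int (poly p a)"
  by (induction p) (simp_all add: map_poly_pCons)

lemma quadratic_integer_not_Rats:
  assumes "quadratic_integer \<beta>"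
  shows "\<beta> \<notin> \<rat>"
proof
  obtain q where q: "quad_minpoly q \<beta>"
    using assms unfolding quadratic_integer_def by blast
  assume "\<beta> \<in> \<rat>"
  moreover have "algebraic_int \<beta>"
    using q unfolding quad_minpoly_def algebraic_int_altdef_ipoly by blast
  ultimately obtain a where a: "\<beta> = of_int a"
    using rational_algebraic_int_is_int by (blast elim: Ints_cases)
  have "poly q a = 0"
    using q unfolding quad_minpoly_def a poly_map_poly_of_int_of_int by simp
  then obtain r where r: "q = [:-a, 1:] * r"
    by (auto simp: poly_eq_0_iff_dvd)
  then have "is_unit [:-a, 1:] \<or> is_unit r"
    using q irreducibleD unfolding quad_minpoly_def by blast
  moreover have "degree r = 1"
  proof -
    have "q \<noteq> 0" using q unfolding quad_minpoly_def by auto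
    then have "r \<noteq> 0" using r by auto
    then show ?thesis
      using q r degree_mult_eq[of "[:-a, 1:]" r] unfolding quad_minpoly_def by simp
  qed
  ultimately show False
    by (auto simp: is_unit_poly_iff)
qed

lemma quadratic_integer_coords_unique:
  assumes "quadratic_integer \<beta>"
    and "of_int a + of_int b * \<beta> = of_int a' + of_int b' * \<beta>"
  shows "a = a' \<and> b = b'"
proof -
  have "b = b'"
  proof (rule ccontr)
    assume "b \<noteq> b'"
    have "of_int (b - b') * \<beta> = of_int (a' - a)"
      using assms(2) by (simp add: algebra_simps)
    with \<open>b \<noteq> b'\<close> have "\<beta> = of_int (a' - a) / of_int (b - b')"
      by (simp add: field_simps)
    with quadratic_integer_not_Rats[OF assms(1)] show False
      by simp
  qed
  with assms(2) show ?thesis by simp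
qed

lemma quad_minpoly_unique:
  assumes "quad_minpoly q \<beta>" and "quad_minpoly q' \<beta>"
  shows "q = q'"
proof -
  have "of_int (coeff p 0) + of_int (coeff p 1) * \<beta> = - \<beta>\<^sup>2" if "quad_minpoly p \<beta>" for p
    using quad_minpoly_root[OF that] by (simp add: eq_neg_iff_add_eq_0 algebra_simps)
  then have "of_int (coeff q 0) + of_int (coeff q 1) * \<beta>
      = of_int (coeff q' 0) + of_int (coeff q' 1) * \<beta>"
    using assms by simp
  moreover have "quadratic_integer \<beta>"
    using assms(1) unfolding quadratic_integer_def by blast
  ultimately have "coeff q 0 = coeff q' 0 \<and> coeff q 1 = coeff q' 1"
    using quadratic_integer_coords_unique by blast
  then show ?thesis
    using assms monic_quadratic_eq unfolding quad_minpoly_def by metis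
qed

lemma the_quad_minpoly:
  assumes "quad_minpoly q \<beta>"
  shows "(THE q. quad_minpoly q \<beta>) = q"
  using assms quad_minpoly_unique by blast

lemma quadratic_integer_root:
  assumes "quadratic_integer \<beta>"
  shows "\<beta>\<^sup>2 = of_int (qtrace \<beta>) * \<beta> - of_int (qnorm \<beta>)"
proof -
  obtain q where q: "quad_minpoly q \<beta>"
    using assms unfolding quadratic_integer_def by blast
  show ?thesis
    using quad_minpoly_root[OF q]
    unfolding qtrace_def qnorm_def the_quad_minpoly[OF q]
    by (simp add: algebra_simps eq_neg_iff_add_eq_0)
qed

lemma qconj_root:
  assumes "quadratic_integer \<beta>"
  shows "(qconj \<beta>)\<^sup>2 = of_int (qtrace \<beta>) * qconj \<beta> - of_int (qnorm \<beta>)"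
  using quadratic_integer_root[OF assms]
  unfolding qconj_def by (simp add: algebra_simps power2_eq_square)

lemma poly_mod_monic_quadratic:
  fixes p :: "int poly"
  shows "\<exists>a b. \<forall>x::'a::comm_ring_1. x\<^sup>2 = of_int t * x - of_int m \<longrightarrow>
           poly (map_poly of_int p) x = of_int a + of_int b * x"
proof (induction p)
  case 0
  show ?case by (intro exI[of _ 0]) simp
next
  case (pCons c p)
  then obtain a b where ab: "\<forall>x::'a. x\<^sup>2 = of_int t * x - of_int m \<longrightarrow>
      poly (map_poly of_int p) x = of_int a + of_int b * x"
    by blast
  show ?case
  proof (intro exI allI impI)
    fix x :: 'a
    assume x: "x\<^sup>2 = of_int t * x - of_int m"
    have "poly (map_poly of_int (pCons c p)) x = of_int c + x * (of_int a + of_int b * x)"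
      using ab x by (simp add: map_poly_pCons)
    also have "\<dots> = of_int c + of_int a * x + of_int b * x\<^sup>2"
      by (simp add: algebra_simps power2_eq_square)
    also have "\<dots> = of_int (c - b * m) + of_int (a + b * t) * x"
      unfolding x by (simp add: algebra_simps)
    finally show "poly (map_poly of_int (pCons c p)) x = of_int (c - b * m) + of_int (a + b * t) * x" .
  qed
qed

lemma poly_qconj_eq:
  assumes "quadratic_integer \<beta>"
    and "poly (map_poly of_int p) \<beta> = poly (map_poly of_int p') \<beta>"
  shows "poly (map_poly of_int p) (qconj \<beta>) = poly (map_poly of_int p') (qconj \<beta>)"
proof -
  obtain a b where ab: "\<forall>x::complex. x\<^sup>2 = of_int (qtrace \<beta>) * x - of_int (qnorm \<beta>) \<longrightarrow>
      poly (map_poly of_int p) x = of_int a + of_int b * x"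
    using poly_mod_monic_quadratic by blast
  obtain a' b' where ab': "\<forall>x::complex. x\<^sup>2 = of_int (qtrace \<beta>) * x - of_int (qnorm \<beta>) \<longrightarrow>
      poly (map_poly of_int p') x = of_int a' + of_int b' * x"
    using poly_mod_monic_quadratic by blast
  have "a = a' \<and> b = b'"
    using assms ab ab' quadratic_integer_root[OF assms(1)]
    by (intro quadratic_integer_coords_unique) auto
  then show ?thesis
    using ab ab' qconj_root[OF assms(1)] by auto
qed

lemma coeff_mult_power_le_poly:
  fixes f :: "'a::linordered_semidom poly"
  assumes "\<And>i. coeff f i \<ge> 0" and "x \<ge> 0"
  shows "coeff f k * x ^ k \<le> poly f x"
proof (cases "k \<le> degree f")
  case True
  then have "coeff f k * x ^ k \<le> (\<Sum>i\<le>degree f. coeff f i * x ^ i)"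
    using assms by (intro member_le_sum) auto
  then show ?thesis by (simp add: poly_altdef)
next
  case False
  then show ?thesis using assms by (simp add: coeff_eq_0 poly_altdef sum_nonneg)
qed

definition dominated_polys :: "real set \<Rightarrow> nat \<Rightarrow> nat \<Rightarrow> nat poly set" where
  "dominated_polys X t n = {f. \<forall>x\<in>X. poly (map_poly of_nat f) x \<le> real t * x ^ n}"

lemma dominated_polys_coeff_power_le:
  assumes "f \<in> dominated_polys X t n" "x \<in> X" "x \<ge> 0"
  shows "real (coeff f k) * x ^ k \<le> real t * x ^ n"
  using coeff_mult_power_le_poly[of "map_poly of_nat f" x k] assms
  unfolding dominated_polys_def by (auto simp: coeff_map_poly)

lemma dominated_polys_coeff_le:
  assumes "f \<in> dominated_polys X t n" "d \<in> X" "g \<in> X" "0 < d" "d \<le> 1" "1 \<le> g"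
  shows "coeff f k \<le> t"
proof -
  have "real (coeff f k) \<le> real t"
  proof (cases "k \<le> n")
    case True
    have "real (coeff f k) * d ^ k \<le> real t * d ^ n"
      using dominated_polys_coeff_power_le assms by simp
    also have "\<dots> \<le> real t * d ^ k"
      using True assms by (intro mult_left_mono power_decreasing) auto
    finally show ?thesis using assms by simp
  next
    case False
    have "real (coeff f k) * g ^ k \<le> real t * g ^ n"
      using dominated_polys_coeff_power_le assms by simp
    also have "\<dots> \<le> real t * g ^ k"
      using False assms by (intro mult_left_mono power_increasing) auto
    finally show ?thesis using assms by simp
  qed
  then show ?thesis by simp
qed

lemma dominated_polys_support:
  assumes "d \<in> X" "g \<in> X" "0 < d" "d < 1" "1 < g"
  obtains K where
    "\<And>f n k. f \<in> dominated_polys X t n \<Longrightarrow> coeff f k \<noteq> 0 \<Longrightarrow> n < k + K \<and> k < n + K"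
proof -
  have "(\<lambda>K. real t * d ^ K) \<longlonglongrightarrow> 0"
    using assms by (intro tendsto_mult_right_zero LIMSEQ_realpow_zero) auto
  then have "\<forall>\<^sub>F K in sequentially. real t * d ^ K < 1"
    by (rule order_tendstoD(2)) simp
  moreover have "\<forall>\<^sub>F K in sequentially. real t < g ^ K"
  proof -
    obtain N where "real t < g ^ N" using real_arch_pow assms(5) by blast
    then show ?thesis
      using assms(5) by (intro eventually_sequentiallyI[of N]) (auto intro: less_le_trans power_increasing)
  qed
  ultimately have "\<forall>\<^sub>F K in sequentially. real t * d ^ K < 1 \<and> real t < g ^ K"
    by (rule eventually_conj)
  then obtain K where dK: "real t * d ^ K < 1" and gK: "real t < g ^ K"
    by (auto simp: eventually_sequentially)
  show thesis
  proof (rule that, rule ccontr)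
    fix f n k
    assume f: "f \<in> dominated_polys X t n" and "coeff f k \<noteq> 0" and "\<not> (n < k + K \<and> k < n + K)"
    then have c1: "1 \<le> real (coeff f k)" and "k + K \<le> n \<or> n + K \<le> k" by auto
    then show False
    proof (elim disjE)
      assume kn: "k + K \<le> n"
      have "d ^ k \<le> real (coeff f k) * d ^ k"
        using c1 assms by simp
      also have "\<dots> \<le> real t * d ^ n"
        using dominated_polys_coeff_power_le[OF f] assms by simp
      also have "\<dots> = d ^ k * (real t * d ^ (n - k))"
        using kn by (simp add: power_add [symmetric])
      also have "\<dots> \<le> d ^ k * (real t * d ^ K)"
        using kn assms by (intro mult_left_mono power_decreasing) auto
      also have "\<dots> < d ^ k"
        using dK assms by simp
      finally show False by simp
    next
      assume nk: "n + K \<le> k"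
      have "g ^ n * real t < g ^ n * g ^ K"
        using gK assms by simp
      also have "\<dots> \<le> g ^ n * g ^ (k - n)"
        using nk assms by (intro mult_left_mono power_increasing) auto
      also have "\<dots> = g ^ k"
        using nk by (simp add: power_add [symmetric])
      also have "\<dots> \<le> real (coeff f k) * g ^ k"
        using c1 assms by simp
      also have "\<dots> \<le> real t * g ^ n"
        using dominated_polys_coeff_power_le[OF f] assms by simp
      finally show False by simp
    qed
  qed
qed

definition window_polys :: "nat \<Rightarrow> nat \<Rightarrow> nat \<Rightarrow> nat poly set" where
  "window_polys b L W = {f. \<forall>k. coeff f k \<le> b \<and> (coeff f k \<noteq> 0 \<longrightarrow> L \<le> k \<and> k < L + W)}"

lemma window_polys_finite_card_le:
  "finite (window_polys b L W) \<and> card (window_polys b L W) \<le> (b + 1) ^ W"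
proof -
  define coeffs_in_window where "coeffs_in_window f = map (\<lambda>j. coeff f (L + j)) [0..<W]" for f :: "nat poly"
  define lists where "lists = {xs. set xs \<subseteq> {0..b} \<and> length xs = W}"
  have inj: "inj_on coeffs_in_window (window_polys b L W)"
  proof (rule inj_onI, rule poly_eqI)
    fix f h k
    assume "f \<in> window_polys b L W" "h \<in> window_polys b L W"
      and eq: "coeffs_in_window f = coeffs_in_window h"
    show "coeff f k = coeff h k"
    proof (cases "L \<le> k \<and> k < L + W")
      case True
      then have "coeffs_in_window p ! (k - L) = coeff p k" for p
        unfolding coeffs_in_window_def by (subst nth_map) auto
      with eq show ?thesis by metis
    next
      case False
      then have "coeff p k = 0" if "p \<in> window_polys b L W" for p
        using that unfolding window_polys_def by blast
      with \<open>f \<in> _\<close> \<open>h \<in> _\<close> show ?thesis by simp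
    qed
  qed
  moreover have image: "coeffs_in_window ` window_polys b L W \<subseteq> lists"
    unfolding lists_def coeffs_in_window_def window_polys_def by auto
  moreover have lists: "finite lists" "card lists = (b + 1) ^ W"
    unfolding lists_def by (simp_all add: finite_lists_length_eq card_lists_length_eq)
  ultimately show ?thesis
    using inj_on_finite[OF inj image] card_inj_on_le[OF inj image] by simp
qed

lemma dominated_polys_uniformly_finite:
  assumes "d \<in> X" "g \<in> X" "0 < d" "d < 1" "1 < g"
  obtains c :: nat where "c > 0"
    and "\<And>n. finite (dominated_polys X t n) \<and> card (dominated_polys X t n) \<le> c"
proof -
  obtain K where K:
    "\<And>f n k. f \<in> dominated_polys X t n \<Longrightarrow> coeff f k \<noteq> 0 \<Longrightarrow> n < k + K \<and> k < n + K"
    using dominated_polys_support assms by blast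
  have "dominated_polys X t n \<subseteq> window_polys t (n - K) (2 * K)" for n
  proof
    fix f
    assume f: "f \<in> dominated_polys X t n"
    have "coeff f k \<le> t" for k
      using dominated_polys_coeff_le[OF f assms(1,2)] assms by simp
    moreover have "n - K \<le> k \<and> k < n - K + 2 * K" if "coeff f k \<noteq> 0" for k
      using K[OF f that] by linarith
    ultimately show "f \<in> window_polys t (n - K) (2 * K)"
      unfolding window_polys_def by blast
  qed
  then have "finite (dominated_polys X t n) \<and> card (dominated_polys X t n) \<le> (t + 1) ^ (2 * K)" for n
    using window_polys_finite_card_le by (meson card_mono finite_subset le_trans)
  then show thesis by (intro that[of "(t + 1) ^ (2 * K)"]) auto
qed

lemma poly_map_poly_of_nat_of_real:
  "poly (map_poly of_nat f) (of_real x :: 'a::{comm_ring_1,real_algebra_1}) = of_real (poly (map_poly of_nat f) x)"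
  by (induction f) (simp_all add: map_poly_pCons)

lemma totally_positive_Re:
  assumes "totally_positive \<beta>"
  shows "\<beta> = of_real (Re \<beta>)" and "qconj \<beta> = of_real (Re (qconj \<beta>))"
  using assms unfolding totally_positive_def by (simp_all add: complex_is_Real_iff complex_eq_iff)

lemma totally_positive_poly_eq_at_Re:
  fixes f :: "nat poly"
  assumes "totally_positive \<beta>" and "poly (map_poly of_nat f) \<beta> = of_int c * \<beta> ^ n"
    and "x \<in> {Re \<beta>, Re (qconj \<beta>)}"
  shows "poly (map_poly of_nat f) x = c * x ^ n"
proof -
  have int_f: "poly (map_poly of_int (map_poly int f)) z = poly (map_poly of_nat f) z" for z :: complex
    by (simp add: map_poly_map_poly o_def)
  have monom: "poly (map_poly of_int (monom c n)) z = of_int c * z ^ n" for z :: complex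
    by (simp add: map_poly_monom poly_monom)
  have "quadratic_integer \<beta>"
    using assms(1) unfolding totally_positive_def by blast
  then have "poly (map_poly of_nat f) (qconj \<beta>) = of_int c * qconj \<beta> ^ n"
    using poly_qconj_eq[of \<beta> "map_poly int f" "monom c n"] assms(2) by (simp only: int_f monom)
  with assms have "poly (map_poly of_nat f) (complex_of_real x) = of_real (c * x ^ n)"
    using totally_positive_Re[OF assms(1)] by auto
  then show ?thesis
    by (simp only: poly_map_poly_of_nat_of_real of_real_eq_iff)
qed

lemma totally_positive_conj_separated_by_one:
  assumes "totally_positive \<beta>" and "qnorm \<beta> < qtrace \<beta>"
  obtains d g where "0 < d" "d < 1" "1 < g" "{d, g} = {Re \<beta>, Re (qconj \<beta>)}"
proof -
  define r s where "r = Re \<beta>" and "s = Re (qconj \<beta>)"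
  have QI: "quadratic_integer \<beta>" and pos: "0 < r" "0 < s"
    using assms(1) unfolding totally_positive_def r_def s_def by auto
  have \<beta>: "\<beta> = of_real r" and sum: "r + s = qtrace \<beta>"
    using totally_positive_Re(1)[OF assms(1)] unfolding r_def s_def qconj_def by auto
  have "of_real (r\<^sup>2) = (of_real (qtrace \<beta> * r - qnorm \<beta>) :: complex)"
    using quadratic_integer_root[OF QI] \<beta> by simp
  then have r2: "r\<^sup>2 = qtrace \<beta> * r - qnorm \<beta>"
    by (simp only: of_real_eq_iff)
  have "r * s = r * (qtrace \<beta> - r)"
    using sum by (metis add_diff_cancel_left')
  also have "\<dots> = qnorm \<beta>"
    using r2 by (simp add: algebra_simps power2_eq_square)
  finally have prod: "r * s = qnorm \<beta>" .
  have "r \<noteq> 1"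
    using quadratic_integer_not_Rats[OF QI] \<beta> by auto
  moreover have "s \<noteq> 1"
  proof
    assume "s = 1"
    then have "r = of_int (qtrace \<beta> - 1)"
      using sum by simp
    then have "\<beta> = of_int (qtrace \<beta> - 1)"
      by (metis \<beta> of_real_of_int_eq)
    then show False
      using quadratic_integer_not_Rats[OF QI] Rats_of_int by metis
  qed
  moreover have "(1 - r) * (1 - s) = 1 - qtrace \<beta> + qnorm \<beta>"
    using sum prod by (simp add: algebra_simps)
  then have "(1 - r) * (1 - s) \<le> 0"
    using assms(2) by simp
  ultimately have "(1 - r) * (1 - s) < 0"
    by (simp add: order_le_less)
  then have "r < 1 \<and> 1 < s \<or> s < 1 \<and> 1 < r"
    by (auto simp: mult_less_0_iff)
  then show thesis
    using that[of r s] that[of s r] pos unfolding r_def s_def by (auto simp: insert_commute)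
qed

lemma p_count_le_card:
  assumes "finite S" and "{f. poly (map_poly of_nat f) \<beta> = \<alpha>} \<subseteq> S"
  shows "p_count \<beta> \<alpha> \<le> enat (card S)"
  using assms finite_subset[OF assms(2)] card_mono[OF assms]
  unfolding p_count_def Let_def by simp

theorem proposition11:
  fixes \<beta> :: complex
  assumes "totally_positive \<beta>"
    and "qtrace \<beta> > qnorm \<beta>"
  shows "\<exists>c::nat. c > 0 \<and>
           (\<forall>n::nat. p_count \<beta> (of_int (qtrace \<beta>) * \<beta> ^ n) \<le> enat c)"
proof -
  define X where "X = {Re \<beta>, Re (qconj \<beta>)}"
  define t where "t = nat (qtrace \<beta>)"
  have t: "qtrace \<beta> = int t"
    using assms(1) unfolding t_def totally_positive_def qconj_def by simp
  obtain d g where "0 < d" "d < 1" "1 < g" and "{d, g} = X"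
    using totally_positive_conj_separated_by_one[OF assms] unfolding X_def by blast
  then obtain c where "c > 0"
    and bounded: "\<And>n. finite (dominated_polys X t n) \<and> card (dominated_polys X t n) \<le> c"
    using dominated_polys_uniformly_finite[of d X g t] by blast
  have "{f. poly (map_poly of_nat f) \<beta> = of_int (qtrace \<beta>) * \<beta> ^ n} \<subseteq> dominated_polys X t n" for n
    using totally_positive_poly_eq_at_Re[OF assms(1), where c = "int t"]
    unfolding dominated_polys_def X_def t by (fastforce intro: eq_refl)
  then have "p_count \<beta> (of_int (qtrace \<beta>) * \<beta> ^ n) \<le> enat c" for n
    using p_count_le_card bounded order.trans enat_ord_simps(1) by meson
  with \<open>c > 0\<close> show ?thesis by blast
qed

end
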